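(* Let $\alpha\in\ell^2$. For every $p>0$ there exists a constant $C_p$ depending only on $p$ such that $$\|(\sigma_k)_{k\in\mathbb{N}}\|_{\ell^p}\le C_p\,\|(a_k(R_\alpha))_{k\ge1}\|_{\ell^p},$$ where the $\ell^p$-(quasi)norms may be infinite.
   Context: $\mathbb{N}=\{0,1,2,\dots\}$; $(R_\alpha f)(k)=\alpha_k\sum_{j=0}^kf(j)$ on $\ell^2$ (square-summable functions $\mathbb{N}\to\mathbb{C}$). $\sigma_k=(\sum_{j=2^k}^{2^{k+1}-1}(j+1)|\alpha_j|^2)^{1/2}$. Approximation numbers: $a_{n+1}(T)=\inf\{\|T-P\|:P$ linear with rank $\le n\}$, $n\ge0$. *)

theory Defs
  imports "HOL-Analysis.Analysis"
begin

text \<open>Real powers on extended nonnegative reals (used only with exponent r > 0).\<close>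
definition ennpowr :: "ennreal \<Rightarrow> real \<Rightarrow> ennreal" where
  "ennpowr x r = (if x = \<infinity> then \<infinity> else ennreal (enn2real x powr r))"

definition lp_norm :: "real \<Rightarrow> (nat \<Rightarrow> ennreal) \<Rightarrow> ennreal" where
  "lp_norm p x = ennpowr (\<Sum>k. ennpowr (x k) p) (1 / p)"

definition in_l2 :: "(nat \<Rightarrow> complex) \<Rightarrow> bool" where
  "in_l2 f \<longleftrightarrow> summable (\<lambda>k. (cmod (f k))\<^sup>2)"

definition l2norm :: "(nat \<Rightarrow> complex) \<Rightarrow> ennreal" where
  "l2norm f = lp_norm 2 (\<lambda>k. ennreal (cmod (f k)))"

definition opnorm :: "((nat \<Rightarrow> complex) \<Rightarrow> (nat \<Rightarrow> complex)) \<Rightarrow> ennreal" where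
  "opnorm T = (SUP f \<in> {f. in_l2 f \<and> l2norm f \<le> 1}. l2norm (T f))"

definition l2_linear :: "((nat \<Rightarrow> complex) \<Rightarrow> (nat \<Rightarrow> complex)) \<Rightarrow> bool" where
  "l2_linear P \<longleftrightarrow>
     (\<forall>f. in_l2 f \<longrightarrow> in_l2 (P f)) \<and>
     (\<forall>f g. in_l2 f \<longrightarrow> in_l2 g \<longrightarrow> P (\<lambda>k. f k + g k) = (\<lambda>k. P f k + P g k)) \<and>
     (\<forall>c f. in_l2 f \<longrightarrow> P (\<lambda>k. c * f k) = (\<lambda>k. c * P f k))"

definition rank_le :: "((nat \<Rightarrow> complex) \<Rightarrow> (nat \<Rightarrow> complex)) \<Rightarrow> nat \<Rightarrow> bool" where
  "rank_le P n \<longleftrightarrow> (\<exists>v :: nat \<Rightarrow> nat \<Rightarrow> complex. \<forall>f. in_l2 f \<longrightarrow>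
      (\<exists>c :: nat \<Rightarrow> complex. P f = (\<lambda>k. \<Sum>i<n. c i * v i k)))"

text \<open>Approximation numbers: a_{n+1}(T) = inf { ||T - P|| : P linear, rank P <= n }.
  Only meaningful for m >= 1.\<close>
definition approx_number :: "((nat \<Rightarrow> complex) \<Rightarrow> (nat \<Rightarrow> complex)) \<Rightarrow> nat \<Rightarrow> ennreal" where
  "approx_number T m =
     (INF P \<in> {P. l2_linear P \<and> rank_le P (m - 1)}. opnorm (\<lambda>f k. T f k - P f k))"

definition R_op :: "(nat \<Rightarrow> complex) \<Rightarrow> (nat \<Rightarrow> complex) \<Rightarrow> (nat \<Rightarrow> complex)" where
  "R_op \<alpha> f = (\<lambda>k. \<alpha> k * (\<Sum>j\<le>k. f j))"

definition sigma :: "(nat \<Rightarrow> complex) \<Rightarrow> nat \<Rightarrow> real" where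
  "sigma \<alpha> k = sqrt (\<Sum>j\<in>{2^k..<2^(k+1)}. real (j + 1) * (cmod (\<alpha> j))\<^sup>2)"

end

theory Submission
  imports Defs
begin

text \<open>
  Fix a set T of n indices, pairwise at least 3 apart. For m in T the test vector h_m has
  partial sums equal to 1 on the dyadic block [2^m, 2^(m+1)) and 0 on the other blocks indexed
  by T, and squared norm at most 5 / 2^(m+1). An operator of rank < n annihilates a unit vector x
  in the span of these vectors; on block k the vector R_alpha x is alpha times the k-th
  coefficient of x, so the norm of R_alpha x is at least min {sigma_k / sqrt 5 | k in T}, and
  this bounds a_n(R_alpha) from below. Peeling off a minimising index one at a time gives
  sum {sigma_k^p | k in T} <= 5^(p/2) sum {a_j^p | 1 <= j <= n}, and the three residue
  classes mod 3 cover all indices.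
\<close>

lemma ennpowr_mono:
  assumes "x \<le> y" "0 < r"
  shows "ennpowr x r \<le> ennpowr y r"
proof (cases "y = \<infinity>")
  case True
  then show ?thesis by (simp add: ennpowr_def)
next
  case False
  then have "x \<noteq> \<infinity>" "enn2real x \<le> enn2real y"
    using assms(1) by (auto simp: top.not_eq_extremum intro: enn2real_mono)
  then show ?thesis
    using False assms(2) by (auto simp: ennpowr_def intro!: ennreal_leI powr_mono2)
qed

lemma ennpowr_ennreal: "0 \<le> t \<Longrightarrow> ennpowr (ennreal t) r = ennreal (t powr r)"
  by (simp add: ennpowr_def)

lemma ennpowr_mult_ennreal:
  assumes "0 < K" "0 < r"
  shows "ennpowr (ennreal K * Y) r = ennreal (K powr r) * ennpowr Y r"
proof (cases Y)
  case (real y)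
  then show ?thesis
    using assms by (simp add: ennpowr_ennreal ennreal_mult[symmetric] powr_mult)
next
  case top
  then show ?thesis using assms by (simp add: ennpowr_def ennreal_mult_top)
qed

lemma lp_norm_le_if_sum_powr_le:
  assumes "0 < p" "0 < K"
    and "(\<Sum>k. ennpowr (x k) p) \<le> ennreal K * (\<Sum>k. ennpowr (y k) p)"
  shows "lp_norm p x \<le> ennreal (K powr (1 / p)) * lp_norm p y"
proof -
  have "lp_norm p x \<le> ennpowr (ennreal K * (\<Sum>k. ennpowr (y k) p)) (1 / p)"
    unfolding lp_norm_def using assms by (intro ennpowr_mono) auto
  also have "\<dots> = ennreal (K powr (1 / p)) * lp_norm p y"
    unfolding lp_norm_def using assms by (intro ennpowr_mult_ennreal) auto
  finally show ?thesis .
qed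

lemma l2norm_ge_sqrt_sum:
  assumes "finite F"
  shows "ennreal (sqrt (\<Sum>i\<in>F. (cmod (f i))\<^sup>2)) \<le> l2norm f"
proof -
  let ?S = "\<Sum>k. ennpowr (ennreal (cmod (f k))) 2"
  have "(\<Sum>i\<in>F. ennreal ((cmod (f i))\<^sup>2)) \<le> (\<Sum>k. ennreal ((cmod (f k))\<^sup>2))"
    by (rule sum_le_suminf) (auto simp: assms)
  then have "ennreal (\<Sum>i\<in>F. (cmod (f i))\<^sup>2) \<le> ?S"
    by (simp add: ennpowr_ennreal)
  then have "ennpowr (ennreal (\<Sum>i\<in>F. (cmod (f i))\<^sup>2)) (1 / 2) \<le> l2norm f"
    unfolding l2norm_def lp_norm_def by (rule ennpowr_mono) simp
  then show ?thesis by (simp add: ennpowr_ennreal sum_nonneg powr_half_sqrt)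
qed

lemma l2norm_finite_support:
  assumes "\<And>i. B \<le> i \<Longrightarrow> f i = 0"
  shows "l2norm f = ennreal (sqrt (\<Sum>i<B. (cmod (f i))\<^sup>2))"
proof -
  have "(\<Sum>k. ennpowr (ennreal (cmod (f k))) 2) = (\<Sum>k<B. ennpowr (ennreal (cmod (f k))) 2)"
    by (rule suminf_finite) (use assms in \<open>auto simp: ennpowr_def\<close>)
  also have "\<dots> = ennreal (\<Sum>i<B. (cmod (f i))\<^sup>2)" by (simp add: ennpowr_ennreal)
  finally show ?thesis
    by (simp add: l2norm_def lp_norm_def ennpowr_ennreal powr_half_sqrt sum_nonneg)
qed

lemma in_l2_finite_support:
  assumes "\<And>i. B \<le> i \<Longrightarrow> f i = 0"
  shows "in_l2 f"
  unfolding in_l2_def by (rule summable_finite[of "{..<B}"]) (use assms in auto)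

lemma l2_linear_zero:
  assumes "l2_linear P"
  shows "P (\<lambda>k. 0) = (\<lambda>k. 0)"
proof -
  have "in_l2 (\<lambda>k. 0)" unfolding in_l2_def by simp
  then have "P (\<lambda>k. 0 * 0) = (\<lambda>k. 0 * P (\<lambda>k. 0) k)"
    using assms unfolding l2_linear_def by blast
  then show ?thesis by simp
qed

lemma l2_linear_sum_finite_support:
  assumes P: "l2_linear P" and "finite F" and supp: "\<And>m i. m \<in> F \<Longrightarrow> B \<le> i \<Longrightarrow> g m i = 0"
  shows "P (\<lambda>k. \<Sum>m\<in>F. l m * g m k) = (\<lambda>k. \<Sum>m\<in>F. l m * P (g m) k)"
  using \<open>finite F\<close> supp
proof (induction F rule: finite_induct)
  case empty
  then show ?case using l2_linear_zero[OF P] by simp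
next
  case (insert a F)
  have l2: "in_l2 (\<lambda>k. l a * g a k)" "in_l2 (\<lambda>k. \<Sum>m\<in>F. l m * g m k)" "in_l2 (g a)"
    using insert.prems by (auto intro!: in_l2_finite_support[of B])
  have "P (\<lambda>k. (\<lambda>k. l a * g a k) k + (\<lambda>k. \<Sum>m\<in>F. l m * g m k) k)
      = (\<lambda>k. P (\<lambda>k. l a * g a k) k + P (\<lambda>k. \<Sum>m\<in>F. l m * g m k) k)"
    using P l2(1,2) unfolding l2_linear_def by blast
  moreover have "P (\<lambda>k. l a * g a k) = (\<lambda>k. l a * P (g a) k)"
    using P l2(3) unfolding l2_linear_def by blast
  ultimately show ?case using insert by simp
qed

lemma sum_le_sum_upto_card_if_subsets_have_witness:
  fixes a b :: "nat \<Rightarrow> 'a::ordered_comm_monoid_add"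
  assumes "finite S" and witness: "\<And>T. T \<subseteq> S \<Longrightarrow> T \<noteq> {} \<Longrightarrow> \<exists>k\<in>T. b k \<le> a (card T)"
  shows "sum b S \<le> (\<Sum>n<card S. a (Suc n))"
  using \<open>finite S\<close>
proof (induction S rule: finite_remove_induct)
  case empty
  then show ?case by simp
next
  case (remove A)
  then obtain k where k: "k \<in> A" "b k \<le> a (card A)" using witness by blast
  have card_A: "card A = Suc (card (A - {k}))" using remove.hyps(1) k(1) by (rule card_Suc_Diff1[symmetric])
  have "sum b A = b k + sum b (A - {k})" using remove.hyps(1) k(1) by (simp add: sum.remove)
  also have "\<dots> \<le> a (card A) + (\<Sum>i<card (A - {k}). a (Suc i))"
    using k(2) remove.IH[OF k(1)] by (rule add_mono)
  also have "\<dots> = (\<Sum>i<card A. a (Suc i))" unfolding card_A by (simp add: add.commute)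
  finally show ?case .
qed

lemma sum_if_const_0:
  "finite X \<Longrightarrow> (\<Sum>i\<in>X. if Q i then a else 0) = of_nat (card {i\<in>X. Q i}) * a"
  by (simp add: sum.inter_filter[symmetric])

lemma suminf_le_if_residue_class_sums_le:
  fixes b :: "nat \<Rightarrow> ennreal"
  assumes "0 < q" and "\<And>S r. finite S \<Longrightarrow> (\<And>k. k \<in> S \<Longrightarrow> k mod q = r) \<Longrightarrow> sum b S \<le> A"
  shows "(\<Sum>k. b k) \<le> of_nat q * A"
  unfolding suminf_eq_SUP
proof (rule SUP_least)
  fix N
  have "(\<Sum>k<N. b k) = (\<Sum>r<q. \<Sum>k\<in>{k. k \<in> {..<N} \<and> k mod q = r}. b k)"
    using assms(1) by (intro sum.group[symmetric]) auto
  also have "\<dots> \<le> (\<Sum>r<q. A)" by (intro sum_mono assms(2)) auto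
  finally show "(\<Sum>k<N. b k) \<le> of_nat q * A" by simp
qed

lemma homogeneous_system_has_nontrivial_solution:
  fixes c :: "'i \<Rightarrow> nat \<Rightarrow> 'a::field"
  assumes "finite T" "d < card T"
  shows "\<exists>l. (\<exists>m\<in>T. l m \<noteq> 0) \<and> (\<forall>i<d. (\<Sum>m\<in>T. l m * c m i) = 0)"
  using assms
proof (induction d arbitrary: T c)
  case 0
  then obtain m where "m \<in> T" by fastforce
  then show ?case by (intro exI[of _ "\<lambda>_. 1"]) auto
next
  case (Suc d)
  show ?case
  proof (cases "\<forall>m\<in>T. c m d = 0")
    case True
    from Suc.IH[of T c] Suc.prems obtain l where "\<exists>m\<in>T. l m \<noteq> 0"
      "\<forall>i<d. (\<Sum>m\<in>T. l m * c m i) = 0" by auto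
    with True show ?thesis by (auto simp: less_Suc_eq)
  next
    case False
    then obtain m0 where m0: "m0 \<in> T" "c m0 d \<noteq> 0" by auto
    define T' where "T' = T - {m0}"
    \<comment> \<open>eliminate the \<open>d\<close>-th equation using row \<open>m0\<close> as pivot\<close>
    define c' where "c' = (\<lambda>m i. c m i - c m d / c m0 d * c m0 i)"
    have "finite T'" "d < card T'" using Suc.prems m0 unfolding T'_def by auto
    from Suc.IH[OF this, of c'] obtain l' where l': "\<exists>m\<in>T'. l' m \<noteq> 0"
      "\<forall>i<d. (\<Sum>m\<in>T'. l' m * c' m i) = 0" by auto
    have l'_all: "(\<Sum>m\<in>T'. l' m * c' m i) = 0" if "i < Suc d" for i
      using l'(2) that m0(2) by (cases "i = d") (auto simp: c'_def)
    define K where "K = (\<Sum>m\<in>T'. l' m * c m d) / c m0 d"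
    define l where "l = l'(m0 := - K)"
    have "(\<Sum>m\<in>T. l m * c m i) = 0" if "i < Suc d" for i
    proof -
      have "(\<Sum>m\<in>T'. l m * c m i) = (\<Sum>m\<in>T'. l' m * c' m i + l' m * c m d / c m0 d * c m0 i)"
        by (rule sum.cong) (auto simp: l_def T'_def c'_def algebra_simps)
      also have "\<dots> = K * c m0 i"
        using l'_all[OF that] by (simp add: sum.distrib K_def sum_divide_distrib sum_distrib_right)
      finally show ?thesis
        using Suc.prems m0 by (simp add: T'_def l_def sum.remove)
    qed
    moreover have "\<exists>m\<in>T. l m \<noteq> 0" using l'(1) unfolding l_def T'_def by auto
    ultimately show ?thesis by blast
  qed
qed

lemma dyadic_blocks_disjoint:
  assumes "k \<noteq> k'"
  shows "{2^k..<2^(k+1)} \<inter> {2^k'..<2^(k'+1)} = ({} :: nat set)"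
proof -
  have "(2::nat)^(k+1) \<le> 2^k'" if "k < k'" for k k' :: nat
    using that by (intro power_increasing) auto
  then show ?thesis using assms by (fastforce simp: neq_iff)
qed

lemma sigma_sq_le:
  "(sigma \<alpha> k)\<^sup>2 \<le> 2^(k+1) * (\<Sum>j\<in>{2^k..<2^(k+1)}. (cmod (\<alpha> j))\<^sup>2)"
proof -
  have "(sigma \<alpha> k)\<^sup>2 = (\<Sum>j\<in>{2^k..<2^(k+1)}. real (j + 1) * (cmod (\<alpha> j))\<^sup>2)"
    unfolding sigma_def by (simp add: sum_nonneg)
  also have "\<dots> \<le> (\<Sum>j\<in>{2^k..<2^(k+1)}. 2^(k+1) * (cmod (\<alpha> j))\<^sup>2)"
  proof (rule sum_mono)
    fix j assume "j \<in> {2^k..<(2::nat)^(k+1)}"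
    then have "j + 1 \<le> (2::nat)^(k+1)" by simp
    then have "real (j + 1) \<le> 2^(k+1)" by (metis of_nat_le_iff of_nat_numeral of_nat_power)
    then show "real (j + 1) * (cmod (\<alpha> j))\<^sup>2 \<le> 2^(k+1) * (cmod (\<alpha> j))\<^sup>2"
      by (intro mult_right_mono) auto
  qed
  finally show ?thesis by (simp add: sum_distrib_left)
qed

lemma sigma_nonneg: "0 \<le> sigma \<alpha> k"
  by (simp add: sigma_def sum_nonneg)

definition ramp_start :: "nat \<Rightarrow> nat" where
  "ramp_start m = 2^m div 2"

definition ramp_length :: "nat \<Rightarrow> nat" where
  "ramp_length m = 2^m - ramp_start m"

text \<open>The partial sums of \<open>test_vector m\<close> rise linearly from 0 to 1 on [ramp_start m, 2^m),
  equal 1 on the block [2^m, 2^(m+1)) and fall linearly back to 0 on [2^(m+1), 2^(m+2));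
  spreading the rise and the fall keeps the squared norm of order 2^-m. The support
  [ramp_start m, 2^(m+2)) meets only the blocks m - 1, m and m + 1, whence the separation
  by 3 below.\<close>
definition test_vector :: "nat \<Rightarrow> nat \<Rightarrow> complex" where
  "test_vector m i =
     (if ramp_start m \<le> i \<and> i < 2^m then 1 / of_nat (ramp_length m) else 0)
   + (if 2^(m+1) \<le> i \<and> i < 2^(m+2) then - 1 / 2^(m+1) else 0)"

lemma ramp_length_pos: "0 < ramp_length m"
  unfolding ramp_length_def ramp_start_def by (simp add: less_mult_imp_div_less)

lemma ramp_start_eq: "0 < m \<Longrightarrow> ramp_start m = 2^(m-1)"
  unfolding ramp_start_def by (cases m) auto

lemma test_vector_eq_0_above: "2^(m+2) \<le> i \<Longrightarrow> test_vector m i = 0"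
proof -
  have "(2::nat)^m \<le> 2^(m+2)" by (simp add: power_increasing)
  then show "2^(m+2) \<le> i \<Longrightarrow> test_vector m i = 0" unfolding test_vector_def by auto
qed

lemma test_vector_eq_0_below: "i < ramp_start m \<Longrightarrow> test_vector m i = 0"
proof -
  have "ramp_start m \<le> 2^(m+1)" unfolding ramp_start_def by simp
  then show "i < ramp_start m \<Longrightarrow> test_vector m i = 0" unfolding test_vector_def by auto
qed

lemma partial_sum_test_vector_below: "j < ramp_start m \<Longrightarrow> (\<Sum>i\<le>j. test_vector m i) = 0"
  by (rule sum.neutral) (auto intro!: test_vector_eq_0_below)

lemma partial_sum_test_vector_block:
  assumes "2^m \<le> j" "j < 2^(m+1)"
  shows "(\<Sum>i\<le>j. test_vector m i) = 1"
proof -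
  have "{i\<in>{..j}. ramp_start m \<le> i \<and> i < 2^m} = {ramp_start m..<2^m}"
       "{i\<in>{..j}. 2^(m+1) \<le> i \<and> i < (2::nat)^(m+2)} = {}"
    using assms by auto
  then have "(\<Sum>i\<le>j. test_vector m i) = of_nat (ramp_length m) * (1 / of_nat (ramp_length m))"
    unfolding test_vector_def sum.distrib
    by (simp only: sum_if_const_0 finite_atMost) (simp add: ramp_length_def)
  then show ?thesis using ramp_length_pos[of m] by simp
qed

lemma partial_sum_test_vector_above:
  assumes "2^(m+2) \<le> j"
  shows "(\<Sum>i\<le>j. test_vector m i) = 0"
proof -
  have "(2::nat)^m \<le> 2^(m+2)" by (simp add: power_increasing)
  then have "{i\<in>{..j}. ramp_start m \<le> i \<and> i < 2^m} = {ramp_start m..<2^m}"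
       "{i\<in>{..j}. 2^(m+1) \<le> i \<and> i < (2::nat)^(m+2)} = {2^(m+1)..<2^(m+2)}"
    using assms by auto
  moreover have "card {(2::nat)^(m+1)..<2^(m+2)} = 2^(m+1)" by simp
  ultimately have "(\<Sum>i\<le>j. test_vector m i)
      = of_nat (ramp_length m) * (1 / of_nat (ramp_length m)) + of_nat (2^(m+1)) * (-1 / 2^(m+1))"
    unfolding test_vector_def sum.distrib
    by (simp only: sum_if_const_0 finite_atMost) (simp add: ramp_length_def)
  then show ?thesis using ramp_length_pos[of m] by simp
qed

lemma norm_sq_test_vector_le:
  assumes "2^(m+2) \<le> B"
  shows "(\<Sum>i<B. (cmod (test_vector m i))\<^sup>2) \<le> 5 / 2^(m+1)"
proof -
  have sq: "(cmod (test_vector m i))\<^sup>2 =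
      (if ramp_start m \<le> i \<and> i < 2^m then 1 / (real (ramp_length m))\<^sup>2 else 0)
    + (if 2^(m+1) \<le> i \<and> i < 2^(m+2) then 1 / (2^(m+1))\<^sup>2 else 0)" for i
    unfolding test_vector_def by (auto simp: norm_divide power_divide norm_power)
  have "(2::nat)^m \<le> 2^(m+2)" by (simp add: power_increasing)
  then have "{i\<in>{..<B}. ramp_start m \<le> i \<and> i < 2^m} = {ramp_start m..<2^m}"
       "{i\<in>{..<B}. 2^(m+1) \<le> i \<and> i < (2::nat)^(m+2)} = {2^(m+1)..<2^(m+2)}"
    using assms by auto
  moreover have "card {(2::nat)^(m+1)..<2^(m+2)} = 2^(m+1)" by simp
  ultimately have "(\<Sum>i<B. (cmod (test_vector m i))\<^sup>2)
      = real (ramp_length m) * (1 / (real (ramp_length m))\<^sup>2) + real (2^(m+1)) * (1 / (2^(m+1))\<^sup>2)"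
    unfolding sq sum.distrib by (simp only: sum_if_const_0 finite_lessThan) (simp add: ramp_length_def)
  also have "\<dots> = 1 / real (ramp_length m) + 1 / 2^(m+1)"
    using ramp_length_pos[of m] by (simp add: power2_eq_square)
  also have "\<dots> \<le> 5 / 2^(m+1)"
  proof -
    have "2 * (2^m div 2) \<le> (2::nat)^m" by simp
    then have "real (2^(m+1)) \<le> real (4 * ramp_length m)"
      unfolding ramp_length_def ramp_start_def by (simp only: of_nat_le_iff) simp
    then show ?thesis using ramp_length_pos[of m] by (simp add: field_simps)
  qed
  finally show ?thesis .
qed

definition separated :: "nat set \<Rightarrow> bool" where
  "separated T \<longleftrightarrow> (\<forall>m\<in>T. \<forall>m'\<in>T. m < m' \<longrightarrow> m + 3 \<le> m')"

lemma separated_if_mod_3_eq: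
  assumes "\<And>k. k \<in> T \<Longrightarrow> k mod 3 = r"
  shows "separated T"
  unfolding separated_def
proof (intro ballI impI)
  fix m m' assume "m \<in> T" "m' \<in> T" "m < m'"
  then have "m mod 3 = m' mod 3" using assms by simp
  then have "3 dvd m' - m" using \<open>m < m'\<close> mod_eq_dvd_iff_nat[of m m' 3] by simp
  then show "m + 3 \<le> m'" using \<open>m < m'\<close> by (auto dest: dvd_imp_le)
qed

lemma test_vector_disjoint:
  assumes "m + 3 \<le> m'"
  shows "test_vector m i = 0 \<or> test_vector m' i = 0"
proof -
  have "(2::nat)^(m+2) \<le> 2^(m'-1)" using assms by (intro power_increasing) auto
  moreover have "ramp_start m' = 2^(m'-1)" using assms by (intro ramp_start_eq) auto
  ultimately show ?thesis
    by (cases "i < 2^(m+2)") (auto intro: test_vector_eq_0_above test_vector_eq_0_below)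
qed

lemma test_combination_eq_0_above:
  assumes "\<And>m. m \<in> T \<Longrightarrow> 2^(m+2) \<le> B" "B \<le> i"
  shows "(\<Sum>m\<in>T. l m * test_vector m i) = 0"
proof (intro sum.neutral ballI)
  fix m assume "m \<in> T"
  then show "l m * test_vector m i = 0"
    using order_trans[OF assms(1) assms(2)] by (simp add: test_vector_eq_0_above)
qed

lemma partial_sum_test_combination:
  assumes T: "finite T" "separated T" and "k \<in> T" and j: "2^k \<le> j" "j < 2^(k+1)"
  shows "(\<Sum>i\<le>j. \<Sum>m\<in>T. l m * test_vector m i) = l k"
proof -
  have "(\<Sum>i\<le>j. test_vector m i) = 0" if "m \<in> T - {k}" for m
  proof (cases "m < k")
    case True
    then have "m + 3 \<le> k" using T(2) that \<open>k \<in> T\<close> unfolding separated_def by auto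
    then have "(2::nat)^(m+2) \<le> 2^k" by (intro power_increasing) auto
    then show ?thesis using j by (intro partial_sum_test_vector_above) auto
  next
    case False
    then have "k + 3 \<le> m" using T(2) that \<open>k \<in> T\<close> unfolding separated_def by auto
    then have "(2::nat)^(k+1) \<le> 2^(m-1)" "ramp_start m = 2^(m-1)"
      by (intro power_increasing ramp_start_eq; simp)+
    then show ?thesis using j by (intro partial_sum_test_vector_below) auto
  qed
  then have "(\<Sum>m\<in>T-{k}. l m * (\<Sum>i\<le>j. test_vector m i)) = 0" by simp
  moreover have "(\<Sum>i\<le>j. \<Sum>m\<in>T. l m * test_vector m i) = (\<Sum>m\<in>T. l m * (\<Sum>i\<le>j. test_vector m i))"
    by (simp add: sum.swap[of _ T] sum_distrib_left)
  ultimately show ?thesis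
    using T(1) \<open>k \<in> T\<close> partial_sum_test_vector_block[OF j] by (simp add: sum.remove)
qed

lemma norm_sq_test_combination_le:
  assumes "finite T" "separated T"
  shows "(cmod (\<Sum>m\<in>T. l m * test_vector m i))\<^sup>2 \<le> (\<Sum>m\<in>T. (cmod (l m))\<^sup>2 * (cmod (test_vector m i))\<^sup>2)"
proof (cases "\<exists>m0\<in>T. test_vector m0 i \<noteq> 0")
  case True
  then obtain m0 where m0: "m0 \<in> T" "test_vector m0 i \<noteq> 0" by auto
  have "test_vector m i = 0" if "m \<in> T - {m0}" for m
    using assms(2) that m0 test_vector_disjoint[of m m0 i] test_vector_disjoint[of m0 m i]
    unfolding separated_def by (metis DiffE insertI1 linorder_neqE_nat)
  then have "(\<Sum>m\<in>T. l m * test_vector m i) = l m0 * test_vector m0 i"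
    using assms(1) m0 by (simp add: sum.remove)
  then have "(cmod (\<Sum>m\<in>T. l m * test_vector m i))\<^sup>2 = (cmod (l m0))\<^sup>2 * (cmod (test_vector m0 i))\<^sup>2"
    by (simp add: norm_mult power_mult_distrib)
  also have "\<dots> \<le> (\<Sum>m\<in>T. (cmod (l m))\<^sup>2 * (cmod (test_vector m i))\<^sup>2)"
    using assms(1) m0 by (intro member_le_sum) auto
  finally show ?thesis .
next
  case False
  then show ?thesis by (simp add: sum_nonneg)
qed

lemma R_op_test_combination_lower:
  fixes l :: "nat \<Rightarrow> complex"
  assumes T: "finite T" "separated T"
    and \<mu>: "\<And>k. k \<in> T \<Longrightarrow> 5 * \<mu>\<^sup>2 \<le> (sigma \<alpha> k)\<^sup>2"
    and B: "\<And>m. m \<in> T \<Longrightarrow> 2^(m+2) \<le> B"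
  defines "x \<equiv> \<lambda>i. \<Sum>m\<in>T. l m * test_vector m i"
  shows "\<mu>\<^sup>2 * (\<Sum>i<B. (cmod (x i))\<^sup>2)
    \<le> (\<Sum>j\<in>(\<Union>k\<in>T. {2^k..<2^(k+1)}). (cmod (R_op \<alpha> x j))\<^sup>2)"
proof -
  define A where "A = (\<lambda>k. \<Sum>j\<in>{2^k..<2^(k+1)}. (cmod (\<alpha> j))\<^sup>2)"
  have "\<mu>\<^sup>2 * (\<Sum>i<B. (cmod (x i))\<^sup>2)
      \<le> \<mu>\<^sup>2 * (\<Sum>i<B. \<Sum>m\<in>T. (cmod (l m))\<^sup>2 * (cmod (test_vector m i))\<^sup>2)"
    unfolding x_def by (intro mult_left_mono sum_mono norm_sq_test_combination_le T) auto
  also have "\<dots> = (\<Sum>m\<in>T. (cmod (l m))\<^sup>2 * (\<mu>\<^sup>2 * (\<Sum>i<B. (cmod (test_vector m i))\<^sup>2)))"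
    by (simp add: sum.swap[of _ "{..<B}"] sum_distrib_left mult_ac)
  also have "\<dots> \<le> (\<Sum>m\<in>T. (cmod (l m))\<^sup>2 * A m)"
  proof (intro sum_mono mult_left_mono)
    fix m assume "m \<in> T"
    have "\<mu>\<^sup>2 * (\<Sum>i<B. (cmod (test_vector m i))\<^sup>2) \<le> \<mu>\<^sup>2 * (5 / 2^(m+1))"
      using B[OF \<open>m \<in> T\<close>] by (intro mult_left_mono norm_sq_test_vector_le) auto
    also have "\<dots> \<le> (sigma \<alpha> m)\<^sup>2 / 2^(m+1)"
      using \<mu>[OF \<open>m \<in> T\<close>] by (simp add: divide_right_mono)
    also have "\<dots> \<le> A m"
      using sigma_sq_le[of \<alpha> m] unfolding A_def by (simp add: field_simps)
    finally show "\<mu>\<^sup>2 * (\<Sum>i<B. (cmod (test_vector m i))\<^sup>2) \<le> A m" .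
  qed simp
  also have "\<dots> = (\<Sum>k\<in>T. \<Sum>j\<in>{2^k..<2^(k+1)}. (cmod (R_op \<alpha> x j))\<^sup>2)"
  proof -
    have "R_op \<alpha> x j = \<alpha> j * l k" if "k \<in> T" "2^k \<le> j" "j < 2^(k+1)" for k j
      unfolding R_op_def x_def using partial_sum_test_combination[OF T that] by simp
    then show ?thesis
      unfolding A_def sum_distrib_left
      by (intro sum.cong refl) (auto simp: norm_mult power_mult_distrib mult_ac)
  qed
  also have "\<dots> = (\<Sum>j\<in>(\<Union>k\<in>T. {2^k..<2^(k+1)}). (cmod (R_op \<alpha> x j))\<^sup>2)"
    using T(1) dyadic_blocks_disjoint by (intro sum.UNION_disjoint[symmetric]) auto
  finally show ?thesis .
qed

lemma finite_rank_annihilates_combination: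
  assumes "finite T" "d < card T" and P: "l2_linear P" "rank_le P d"
    and supp: "\<And>m i. m \<in> T \<Longrightarrow> B \<le> i \<Longrightarrow> g m i = 0"
  shows "\<exists>l. (\<exists>m\<in>T. l m \<noteq> 0) \<and> P (\<lambda>i. \<Sum>m\<in>T. l m * g m i) = (\<lambda>i. 0)"
proof -
  obtain v where v: "\<And>f. in_l2 f \<Longrightarrow> \<exists>c. P f = (\<lambda>k. \<Sum>i<d. c i * v i k)"
    using P(2) unfolding rank_le_def by blast
  have "\<forall>m\<in>T. \<exists>c. P (g m) = (\<lambda>k. \<Sum>i<d. c i * v i k)"
    using supp by (blast intro: v in_l2_finite_support)
  then obtain c where c: "\<And>m. m \<in> T \<Longrightarrow> P (g m) = (\<lambda>k. \<Sum>i<d. c m i * v i k)"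
    by metis
  obtain l where l: "\<exists>m\<in>T. l m \<noteq> 0" "\<forall>i<d. (\<Sum>m\<in>T. l m * c m i) = 0"
    using homogeneous_system_has_nontrivial_solution[OF assms(1,2)] by blast
  have "P (\<lambda>i. \<Sum>m\<in>T. l m * g m i) = (\<lambda>k. \<Sum>m\<in>T. l m * P (g m) k)"
    using l2_linear_sum_finite_support[OF P(1) assms(1)] supp by blast
  also have "\<dots> = (\<lambda>k. \<Sum>i<d. (\<Sum>m\<in>T. l m * c m i) * v i k)"
    by (simp add: c sum_distrib_left sum_distrib_right sum.swap[of _ T] mult.assoc)
  also have "\<dots> = (\<lambda>k. 0)" using l(2) by simp
  finally show ?thesis using l(1) by blast
qed

lemma sum_sq_test_combination_pos:
  assumes T: "finite T" "separated T" and "m \<in> T" "l m \<noteq> 0" "2^m < B"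
  shows "0 < (\<Sum>i<B. (cmod (\<Sum>m\<in>T. l m * test_vector m i))\<^sup>2)"
proof (rule ccontr)
  assume "\<not> ?thesis"
  then have "(\<Sum>i<B. (cmod (\<Sum>m\<in>T. l m * test_vector m i))\<^sup>2) = 0"
    using sum_nonneg[of "{..<B}" "\<lambda>i. (cmod (\<Sum>m\<in>T. l m * test_vector m i))\<^sup>2"] by simp
  then have "\<forall>i\<in>{..<B}. (\<Sum>m\<in>T. l m * test_vector m i) = 0"
    by (simp add: sum_nonneg_eq_0_iff)
  moreover have "{..2^m} \<subseteq> {..<B}" using \<open>2^m < B\<close> by auto
  ultimately have "(\<Sum>i\<le>2^m. \<Sum>m\<in>T. l m * test_vector m i) = 0" by (auto intro: sum.neutral)
  moreover have "(\<Sum>i\<le>2^m. \<Sum>m\<in>T. l m * test_vector m i) = l m"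
    using \<open>m \<in> T\<close> by (intro partial_sum_test_combination T) auto
  ultimately show False using \<open>l m \<noteq> 0\<close> by simp
qed

lemma exists_unit_test_combination_in_kernel:
  assumes T: "finite T" "T \<noteq> {}" "separated T" and P: "l2_linear P" "rank_le P (card T - 1)"
    and B: "\<And>m. m \<in> T \<Longrightarrow> 2^(m+2) \<le> B"
  shows "\<exists>l. P (\<lambda>i. \<Sum>m\<in>T. l m * test_vector m i) = (\<lambda>i. 0)
           \<and> (\<Sum>i<B. (cmod (\<Sum>m\<in>T. l m * test_vector m i))\<^sup>2) = 1"
proof -
  have supp: "test_vector m i = 0" if "m \<in> T" "B \<le> i" for m i
    using order_trans[OF B[OF that(1)] that(2)] by (rule test_vector_eq_0_above)
  have rank_lt: "card T - 1 < card T" using T(1,2) by (simp add: card_gt_0_iff)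
  obtain l where l: "\<exists>m\<in>T. l m \<noteq> 0" "P (\<lambda>i. \<Sum>m\<in>T. l m * test_vector m i) = (\<lambda>i. 0)"
    using finite_rank_annihilates_combination[where g = test_vector, OF T(1) rank_lt P supp] by blast
  define x where "x = (\<lambda>i. \<Sum>m\<in>T. l m * test_vector m i)"
  define s where "s = (\<Sum>i<B. (cmod (x i))\<^sup>2)"
  define c where "c = 1 / complex_of_real (sqrt s)"
  have "0 < s"
  proof -
    obtain m where m: "m \<in> T" "l m \<noteq> 0" using l(1) by blast
    have "(2::nat)^m < 2^(m+2)" by (rule power_strict_increasing) auto
    then have "2^m < B" using B[OF m(1)] by (rule less_le_trans)
    then show ?thesis unfolding s_def x_def using T m by (intro sum_sq_test_combination_pos)
  qed
  have "in_l2 x"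
    unfolding x_def using B by (intro in_l2_finite_support test_combination_eq_0_above)
  then have "P (\<lambda>i. c * x i) = (\<lambda>i. c * P x i)"
    using P(1) unfolding l2_linear_def by blast
  define y where "y = (\<lambda>i. \<Sum>m\<in>T. (c * l m) * test_vector m i)"
  have y_eq: "y = (\<lambda>i. c * x i)"
    unfolding x_def y_def by (simp add: sum_distrib_left mult.assoc)
  have "P y = (\<lambda>i. 0)"
    using \<open>P (\<lambda>i. c * x i) = (\<lambda>i. c * P x i)\<close> l(2) unfolding y_eq x_def by simp
  moreover have "(\<Sum>i<B. (cmod (y i))\<^sup>2) = 1"
    using \<open>0 < s\<close> unfolding y_eq c_def s_def
    by (simp add: norm_mult norm_divide power_mult_distrib power_divide sum_divide_distrib[symmetric])
  ultimately show ?thesis unfolding y_def by (intro exI[of _ "\<lambda>m. c * l m"] conjI)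
qed

lemma opnorm_R_op_minus_finite_rank_ge:
  assumes T: "finite T" "T \<noteq> {}" "separated T" and P: "l2_linear P" "rank_le P (card T - 1)"
  shows "ennreal (Min (sigma \<alpha> ` T) / sqrt 5) \<le> opnorm (\<lambda>f k. R_op \<alpha> f k - P f k)"
proof -
  define B where "B = (2::nat)^(Max T + 2)"
  have B: "2^(m+2) \<le> B" if "m \<in> T" for m
    unfolding B_def using T(1) that by (intro power_increasing) auto
  obtain l where Px: "P (\<lambda>i. \<Sum>m\<in>T. l m * test_vector m i) = (\<lambda>i. 0)"
      and x_norm: "(\<Sum>i<B. (cmod (\<Sum>m\<in>T. l m * test_vector m i))\<^sup>2) = 1"
    using exists_unit_test_combination_in_kernel[OF T P B] by blast
  define x where "x = (\<lambda>i. \<Sum>m\<in>T. l m * test_vector m i)"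
  define F where "F = (\<Union>k\<in>T. {2^k..<(2::nat)^(k+1)})"
  define \<mu> where "\<mu> = Min (sigma \<alpha> ` T) / sqrt 5"
  have supp: "x i = 0" if "B \<le> i" for i
    unfolding x_def using B that by (rule test_combination_eq_0_above)
  have Min_nonneg: "0 \<le> Min (sigma \<alpha> ` T)" using T(1,2) by (simp add: sigma_nonneg)
  have "5 * \<mu>\<^sup>2 \<le> (sigma \<alpha> k)\<^sup>2" if "k \<in> T" for k
  proof -
    have "Min (sigma \<alpha> ` T) \<le> sigma \<alpha> k" using T(1) that by simp
    then show ?thesis unfolding \<mu>_def using Min_nonneg by (simp add: power_divide power_mono)
  qed
  then have "\<mu>\<^sup>2 \<le> (\<Sum>j\<in>F. (cmod (R_op \<alpha> x j))\<^sup>2)"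
    using R_op_test_combination_lower[OF T(1,3) _ B, of \<mu> \<alpha> l] x_norm unfolding x_def F_def by simp
  then have "ennreal \<mu> \<le> ennreal (sqrt (\<Sum>j\<in>F. (cmod (R_op \<alpha> x j))\<^sup>2))"
    using Min_nonneg unfolding \<mu>_def by (intro ennreal_leI real_le_rsqrt) auto
  also have "\<dots> \<le> l2norm (R_op \<alpha> x)"
    unfolding F_def using T(1) by (intro l2norm_ge_sqrt_sum) auto
  also have "\<dots> \<le> opnorm (\<lambda>f k. R_op \<alpha> f k - P f k)"
  proof -
    have "in_l2 x" using supp by (rule in_l2_finite_support)
    moreover have "l2norm x = 1"
      using l2norm_finite_support[OF supp] x_norm unfolding x_def by simp
    ultimately have "l2norm (\<lambda>k. R_op \<alpha> x k - P x k) \<le> opnorm (\<lambda>f k. R_op \<alpha> f k - P f k)"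
      unfolding opnorm_def by (intro SUP_upper) auto
    then show ?thesis using Px unfolding x_def by simp
  qed
  finally show ?thesis unfolding \<mu>_def .
qed

lemma approx_number_R_op_ge:
  assumes "finite T" "T \<noteq> {}" "separated T"
  shows "ennreal (Min (sigma \<alpha> ` T) / sqrt 5) \<le> approx_number (R_op \<alpha>) (card T)"
  unfolding approx_number_def
  by (rule INF_greatest) (auto intro: opnorm_R_op_minus_finite_rank_ge[OF assms])

lemma suminf_sigma_powr_le:
  assumes "0 < p"
  shows "(\<Sum>k. ennpowr (ennreal (sigma \<alpha> k)) p)
    \<le> ennreal (3 * sqrt 5 powr p) * (\<Sum>n. ennpowr (approx_number (R_op \<alpha>) (Suc n)) p)"
proof -
  define a where "a = (\<lambda>n. ennreal (sqrt 5 powr p) * ennpowr (approx_number (R_op \<alpha>) n) p)"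
  define b where "b = (\<lambda>k. ennpowr (ennreal (sigma \<alpha> k)) p)"
  have witness: "\<exists>k\<in>T. b k \<le> a (card T)" if "finite T" "T \<noteq> {}" "separated T" for T
  proof -
    have "Min (sigma \<alpha> ` T) \<in> sigma \<alpha> ` T" using that by (intro Min_in) auto
    then obtain k where "k \<in> T" and k_min: "Min (sigma \<alpha> ` T) = sigma \<alpha> k" by blast
    have "ennreal (sigma \<alpha> k) = ennreal (sqrt 5) * ennreal (Min (sigma \<alpha> ` T) / sqrt 5)"
      using k_min by (simp add: ennreal_mult[symmetric] sigma_nonneg)
    also have "\<dots> \<le> ennreal (sqrt 5) * approx_number (R_op \<alpha>) (card T)"
      using approx_number_R_op_ge[OF that] by (rule mult_left_mono) simp
    finally have "b k \<le> ennpowr (ennreal (sqrt 5) * approx_number (R_op \<alpha>) (card T)) p"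
      unfolding b_def using assms by (rule ennpowr_mono)
    then show ?thesis using \<open>k \<in> T\<close> assms unfolding a_def by (auto simp: ennpowr_mult_ennreal)
  qed
  have "sum b S \<le> (\<Sum>n. a (Suc n))" if "finite S" "\<And>k. k \<in> S \<Longrightarrow> k mod 3 = r" for S r
  proof -
    have "sum b S \<le> (\<Sum>n<card S. a (Suc n))"
    proof (rule sum_le_sum_upto_card_if_subsets_have_witness[OF \<open>finite S\<close>])
      fix T assume "T \<subseteq> S" "T \<noteq> {}"
      moreover have "finite T" using \<open>T \<subseteq> S\<close> \<open>finite S\<close> by (rule finite_subset)
      moreover have "separated T" using \<open>T \<subseteq> S\<close> that(2) by (intro separated_if_mod_3_eq) blast
      ultimately show "\<exists>k\<in>T. b k \<le> a (card T)" by (intro witness)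
    qed
    also have "\<dots> \<le> (\<Sum>n. a (Suc n))" by (intro sum_le_suminf) auto
    finally show ?thesis .
  qed
  then have "(\<Sum>k. b k) \<le> of_nat 3 * (\<Sum>n. a (Suc n))"
    by (intro suminf_le_if_residue_class_sums_le) auto
  then show ?thesis unfolding a_def b_def by (simp add: ennreal_mult mult.assoc)
qed

theorem theorem5p5:
  fixes p :: real
  assumes "p > 0"
  shows "\<exists>C::real. C > 0 \<and> (\<forall>\<alpha>. in_l2 \<alpha> \<longrightarrow>
           lp_norm p (\<lambda>k. ennreal (sigma \<alpha> k))
             \<le> ennreal C * lp_norm p (\<lambda>k. approx_number (R_op \<alpha>) (Suc k)))"
proof -
  define K where "K = 3 * sqrt 5 powr p"
  \<comment> \<open>the bound holds for every \<open>\<alpha>\<close>\<close>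
  have "lp_norm p (\<lambda>k. ennreal (sigma \<alpha> k))
      \<le> ennreal (K powr (1 / p)) * lp_norm p (\<lambda>k. approx_number (R_op \<alpha>) (Suc k))" for \<alpha>
    using assms suminf_sigma_powr_le[OF assms, of \<alpha>] unfolding K_def
    by (intro lp_norm_le_if_sum_powr_le) auto
  moreover have "0 < K powr (1 / p)" unfolding K_def by simp
  ultimately show ?thesis by blast
qed

end
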